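(* If a series $\sum u_n$ of fuzzy numbers is $E_p$ summable to a fuzzy number $\nu$ and $\sqrt{n}\,D(u_n,\bar{0})=O(1)$, then $\sum u_n\in bs(F)$, i.e. the sequence of partial sums $s_n=\sum_{k=0}^n u_k$ is bounded.
   Context: $E^1$ denotes the space of fuzzy numbers (normal, fuzzy convex, upper semi-continuous fuzzy sets on $\mathbb{R}$ with compact support), with addition and scalar multiplication defined levelwise on $\alpha$-level sets $[u]_\alpha=[u^-_\alpha,u^+_\alpha]$, and metric $D(u,v)=\sup_{\alpha\in[0,1]}\max\{|u^-_\alpha-v^-_\alpha|,|u^+_\alpha-v^+_\alpha|\}$; $\bar{0}$ is the fuzzy number equal to $1$ at $0$ and $0$ elsewhere. For $p>0$, a sequence $(s_n)$ of fuzzy numbers has Euler means $t^p_n=\frac{1}{(p+1)^n}\sum_{k=0}^n\binom{n}{k}p^{n-k}s_k$, and is $E_p$ summable to $\nu$ if $D(t^p_n,\nu)\to 0$. A series $\sum u_n$ of fuzzy numbers is $E_p$ summable to $\nu$ if its sequence of partial sums $s_n=\sum_{k=0}^n u_k$ is $E_p$ summable to $\nu$. $bs(F)$ is the set of series of fuzzy numbers whose partial sums are bounded, i.e. there is $M>0$ with $D(s_n,\bar{0})<M$ for all $n$. *)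

theory Defs
  imports "HOL-Analysis.Analysis"
begin

type_synonym fuzzy = "real \<Rightarrow> real"

definition usc :: "fuzzy \<Rightarrow> bool" where
  "usc u \<longleftrightarrow> (\<forall>a. closed {x. a \<le> u x})"

definition fuzzy_number :: "fuzzy \<Rightarrow> bool" where
  "fuzzy_number u \<longleftrightarrow>
     (\<forall>x. 0 \<le> u x \<and> u x \<le> 1)
   \<and> (\<exists>x. u x = 1)
   \<and> (\<forall>x y l. 0 \<le> l \<and> l \<le> 1 \<longrightarrow> min (u x) (u y) \<le> u (l * x + (1 - l) * y))
   \<and> usc u
   \<and> compact (closure {x. 0 < u x})"

definition flevel :: "fuzzy \<Rightarrow> real \<Rightarrow> real set" where
  "flevel u a = (if a = 0 then closure {x. 0 < u x} else {x. a \<le> u x})"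

definition flower :: "fuzzy \<Rightarrow> real \<Rightarrow> real" where
  "flower u a = Inf (flevel u a)"

definition fupper :: "fuzzy \<Rightarrow> real \<Rightarrow> real" where
  "fupper u a = Sup (flevel u a)"

text \<open>The fuzzy set whose alpha-levels (alpha in (0,1]) are the sets L alpha.\<close>
definition from_levels :: "(real \<Rightarrow> real set) \<Rightarrow> fuzzy" where
  "from_levels L = (\<lambda>x. Sup ({0} \<union> {a. 0 < a \<and> a \<le> 1 \<and> x \<in> L a}))"

definition fadd :: "fuzzy \<Rightarrow> fuzzy \<Rightarrow> fuzzy" where
  "fadd u v = from_levels (\<lambda>a. {y + z | y z. y \<in> flevel u a \<and> z \<in> flevel v a})"

definition fscale :: "real \<Rightarrow> fuzzy \<Rightarrow> fuzzy" where
  "fscale c u = from_levels (\<lambda>a. (\<lambda>y. c * y) ` flevel u a)"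

definition fzero :: fuzzy where
  "fzero = (\<lambda>x. if x = 0 then 1 else 0)"

definition fdist :: "fuzzy \<Rightarrow> fuzzy \<Rightarrow> real" where
  "fdist u v = (SUP a\<in>{0..1}. max \<bar>flower u a - flower v a\<bar> \<bar>fupper u a - fupper v a\<bar>)"

fun fsum :: "(nat \<Rightarrow> fuzzy) \<Rightarrow> nat \<Rightarrow> fuzzy" where
  "fsum f 0 = f 0"
| "fsum f (Suc n) = fadd (fsum f n) (f (Suc n))"

definition euler_mean :: "real \<Rightarrow> (nat \<Rightarrow> fuzzy) \<Rightarrow> nat \<Rightarrow> fuzzy" where
  "euler_mean p s n = fsum (\<lambda>k. fscale (real (n choose k) * p ^ (n - k) / (p + 1) ^ n) (s k)) n"

definition Ep_summable_seq :: "real \<Rightarrow> (nat \<Rightarrow> fuzzy) \<Rightarrow> fuzzy \<Rightarrow> bool" where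
  "Ep_summable_seq p s \<nu> \<longleftrightarrow> (\<lambda>n. fdist (euler_mean p s n) \<nu>) \<longlonglongrightarrow> 0"

definition Ep_summable_series :: "real \<Rightarrow> (nat \<Rightarrow> fuzzy) \<Rightarrow> fuzzy \<Rightarrow> bool" where
  "Ep_summable_series p u \<nu> \<longleftrightarrow> Ep_summable_seq p (fsum u) \<nu>"

definition bs_F :: "(nat \<Rightarrow> fuzzy) \<Rightarrow> bool" where
  "bs_F u \<longleftrightarrow> (\<exists>M>0. \<forall>n. fdist (fsum u n) fzero < M)"

end

theory Submission
  imports Defs
begin

text \<open>Every level set of a fuzzy number is a compact interval, and the levelwise operations act on
  the endpoints by ordinary addition and multiplication; so for each level \<open>\<alpha>\<close> and each endpoint
  the problem reduces to the real Tauberian statement: if \<open>|x\<^sub>k| \<le> C/\<surd>k\<close> and the Euler means of the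
  partial sums \<open>S\<^sub>m\<close> are bounded, then \<open>S\<^sub>m\<close> is bounded, uniformly in \<open>\<alpha>\<close>.
  The decay condition makes \<open>S\<close> vary by at most \<open>2C|\<surd>m - \<surd>k|\<close>. The Euler mean of order \<open>n\<close>
  averages \<open>S\<^sub>k\<close> against the binomial distribution with parameters \<open>n\<close> and \<open>1/(p+1)\<close>; choosing
  \<open>n \<approx> (p+1)m\<close> centres it at \<open>m\<close> with variance \<open>O(m)\<close>, so the mean differs from \<open>S\<^sub>m\<close> by \<open>O(C)\<close>.\<close>

section \<open>A Tauberian bound for Euler means of real series\<close>

lemma binomial_weights_sum:
  fixes q :: real
  shows "(\<Sum>k\<le>n. real (n choose k) * q^k * (1 - q)^(n - k)) = 1"
  using binomial_ring[of q "1 - q" n] by (simp add: mult_ac)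

lemma of_nat_binomial_absorption:
  "real (Suc m choose Suc k) * real (Suc k) = real (Suc m) * real (m choose k)"
  by (metis Suc_times_binomial_eq of_nat_mult)

lemma binomial_weights_mean:
  fixes q :: real
  shows "(\<Sum>k\<le>n. real k * (real (n choose k) * q^k * (1 - q)^(n - k))) = real n * q"
proof (cases n)
  case (Suc m)
  have "(\<Sum>k\<le>Suc m. real k * (real (Suc m choose k) * q^k * (1 - q)^(Suc m - k)))
      = (\<Sum>k\<le>m. real (Suc m choose Suc k) * real (Suc k) * (q * q^k * (1 - q)^(m - k)))"
    by (subst sum.atMost_Suc_shift) (simp add: mult_ac del: binomial_Suc_Suc of_nat_Suc)
  also have "\<dots> = (\<Sum>k\<le>m. real (Suc m) * q * (real (m choose k) * q^k * (1 - q)^(m - k)))"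
    by (intro sum.cong refl) (simp only: of_nat_binomial_absorption, simp add: mult_ac)
  also have "\<dots> = real (Suc m) * q"
    by (simp add: sum_distrib_left[symmetric] binomial_weights_sum)
  finally show ?thesis using Suc by simp
qed simp

lemma binomial_weights_second_moment:
  fixes q :: real
  shows "(\<Sum>k\<le>n. (real k)^2 * (real (n choose k) * q^k * (1 - q)^(n - k)))
           = real n * q * ((real n - 1) * q + 1)"
proof (cases n)
  case (Suc m)
  have "(\<Sum>k\<le>Suc m. (real k)^2 * (real (Suc m choose k) * q^k * (1 - q)^(Suc m - k)))
      = (\<Sum>k\<le>m. real (Suc m choose Suc k) * real (Suc k)
                   * (real (Suc k) * q * q^k * (1 - q)^(m - k)))"
    by (subst sum.atMost_Suc_shift)
      (simp add: power2_eq_square mult_ac del: binomial_Suc_Suc of_nat_Suc)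
  also have "\<dots> = (\<Sum>k\<le>m. real (Suc m) * q
                   * ((real k + 1) * (real (m choose k) * q^k * (1 - q)^(m - k))))"
    by (intro sum.cong refl) (simp only: of_nat_binomial_absorption, simp add: algebra_simps)
  also have "\<dots> = real (Suc m) * q * (real m * q + 1)"
    by (simp add: sum_distrib_left[symmetric] distrib_right sum.distrib
        binomial_weights_sum binomial_weights_mean)
  finally show ?thesis using Suc by simp
qed simp

lemma binomial_weights_variance:
  fixes q x :: real
  shows "(\<Sum>k\<le>n. real (n choose k) * q^k * (1 - q)^(n - k) * (x - real k)^2)
           = (x - real n * q)^2 + real n * q * (1 - q)"
proof -
  define w where "w k = real (n choose k) * q^k * (1 - q)^(n - k)" for k
  have "(\<Sum>k\<le>n. w k * (x - real k)^2)
          = x^2 * (\<Sum>k\<le>n. w k) - 2 * x * (\<Sum>k\<le>n. real k * w k) + (\<Sum>k\<le>n. (real k)^2 * w k)"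
    by (simp add: power2_diff algebra_simps sum.distrib sum_subtractf sum_distrib_left sum_distrib_right)
  also have "\<dots> = (x - real n * q)^2 + real n * q * (1 - q)"
    using binomial_weights_sum[of n q] binomial_weights_mean[of n q]
      binomial_weights_second_moment[of n q]
    by (simp add: w_def power2_eq_square algebra_simps)
  finally show ?thesis by (simp add: w_def)
qed

lemma inverse_sqrt_le_twice_sqrt_diff:
  "1 / sqrt (real (Suc m)) \<le> 2 * (sqrt (real (Suc m)) - sqrt (real m))"
proof -
  define a b where "a = sqrt (real (Suc m))" and "b = sqrt (real m)"
  have "a > 0" "b \<le> a" by (simp_all add: a_def b_def)
  moreover have "a^2 = b^2 + 1" by (simp add: a_def b_def)
  then have "2 * a * (a - b) - 1 = (a - b)^2" by (simp add: power2_eq_square algebra_simps)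
  ultimately have "1 \<le> 2 * a * (a - b)" using zero_le_power2[of "a - b"] by linarith
  then show ?thesis
    using \<open>a > 0\<close> unfolding a_def[symmetric] b_def[symmetric] by (simp add: divide_le_eq mult_ac)
qed

lemma partial_sums_sqrt_lipschitz:
  fixes x :: "nat \<Rightarrow> real"
  assumes x: "\<And>k. k \<ge> 1 \<Longrightarrow> \<bar>x k\<bar> \<le> C / sqrt (real k)" and C: "C \<ge> 0"
  shows "\<bar>(\<Sum>j\<le>m. x j) - (\<Sum>j\<le>k. x j)\<bar> \<le> 2 * C * \<bar>sqrt (real m) - sqrt (real k)\<bar>"
proof -
  have ordered: "\<bar>(\<Sum>j\<le>m. x j) - (\<Sum>j\<le>k. x j)\<bar> \<le> 2 * C * (sqrt (real m) - sqrt (real k))"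
    if "k \<le> m" for k m
    using that
  proof (induction m rule: dec_induct)
    case (step m)
    have "\<bar>x (Suc m)\<bar> \<le> C * (1 / sqrt (real (Suc m)))" using x[of "Suc m"] by simp
    also have "\<dots> \<le> C * (2 * (sqrt (real (Suc m)) - sqrt (real m)))"
      using inverse_sqrt_le_twice_sqrt_diff C by (rule mult_left_mono)
    finally show ?case using step.IH by (simp add: algebra_simps)
  qed simp
  show ?thesis
  proof (cases "k \<le> m")
    case False
    then show ?thesis using ordered[of m k] by (simp add: abs_minus_commute)
  qed (use ordered[of k m] in simp)
qed

lemma twice_abs_sqrt_diff_le:
  assumes "m \<ge> 1"
  shows "2 * \<bar>sqrt (real m) - sqrt (real k)\<bar> \<le> 1 + (real m - real k)^2 / real m"
proof -
  define a b where "a = sqrt (real m)" and "b = sqrt (real k)"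
  have a: "a > 0" "a^2 = real m" and b: "b \<ge> 0" "b^2 = real k"
    using assms by (simp_all add: a_def b_def)
  have "(real m - real k)^2 / real m = (a - b)^2 * ((a + b)^2 / a^2)"
    using a by (simp add: a(2)[symmetric] b(2)[symmetric] field_simps power2_eq_square)
  moreover have "(a + b)^2 / a^2 \<ge> 1" using power_mono[of a "a + b" 2] a(1) b(1) by simp
  then have "(a - b)^2 * ((a + b)^2 / a^2) \<ge> (a - b)^2"
    by (metis mult_left_mono mult.right_neutral zero_le_power2)
  moreover have "2 * \<bar>a - b\<bar> \<le> 1 + (a - b)^2"
    using zero_le_power2[of "\<bar>a - b\<bar> - 1"] by (simp add: power2_diff)
  ultimately show ?thesis unfolding a_def[symmetric] b_def[symmetric] by linarith
qed

lemma binomial_average_close: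
  fixes S :: "nat \<Rightarrow> real" and q C :: real
  assumes S: "\<And>k. \<bar>S m - S k\<bar> \<le> 2 * C * \<bar>sqrt (real m) - sqrt (real k)\<bar>"
    and C: "C \<ge> 0" and m: "m \<ge> 1" and q: "0 < q" "q \<le> 1"
    and mean: "real n * q \<le> real m" "real m < real n * q + q"
  shows "\<bar>S m - (\<Sum>k\<le>n. real (n choose k) * q^k * (1 - q)^(n - k) * S k)\<bar> \<le> 3 * C"
proof -
  define w where "w k = real (n choose k) * q^k * (1 - q)^(n - k)" for k
  have w: "w k \<ge> 0" for k using q by (simp add: w_def)
  have "S m - (\<Sum>k\<le>n. w k * S k) = (\<Sum>k\<le>n. w k * (S m - S k))"
    using binomial_weights_sum[of n q]
    by (simp add: w_def algebra_simps sum_subtractf sum_distrib_left[symmetric] sum_distrib_right[symmetric])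
  also have "\<bar>\<dots>\<bar> \<le> (\<Sum>k\<le>n. w k * (C * (1 + (real m - real k)^2 / real m)))"
  proof (rule order_trans[OF sum_abs sum_mono])
    fix k
    have "\<bar>S m - S k\<bar> \<le> C * (1 + (real m - real k)^2 / real m)"
      using S[of k] mult_left_mono[OF twice_abs_sqrt_diff_le[OF m, of k] C] by simp
    then show "\<bar>w k * (S m - S k)\<bar> \<le> w k * (C * (1 + (real m - real k)^2 / real m))"
      using w[of k] by (simp add: abs_mult mult_left_mono)
  qed
  also have "\<dots> = C * (1 + (\<Sum>k\<le>n. w k * (real m - real k)^2) / real m)"
    using binomial_weights_sum[of n q]
    by (simp add: w_def algebra_simps sum.distrib sum_distrib_left[symmetric] sum_divide_distrib[symmetric])
  also have "(\<Sum>k\<le>n. w k * (real m - real k)^2) \<le> 1 + real m"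
  proof -
    have "(real m - real n * q)^2 \<le> 1"
      using mean q by (simp add: abs_le_square_iff[symmetric] power_le_one_iff)
    moreover have "real n * q * (1 - q) \<le> real m"
      using mean q by (smt (verit) mult_left_le mult_nonneg_nonneg of_nat_0_le_iff)
    ultimately show ?thesis using binomial_weights_variance[of n q "real m"] by (simp add: w_def)
  qed
  then have "C * (1 + (\<Sum>k\<le>n. w k * (real m - real k)^2) / real m) \<le> C * (1 + (1 + real m) / real m)"
    using C m by (intro mult_left_mono add_left_mono divide_right_mono) auto
  also have "\<dots> \<le> 3 * C"
    using C m mult_left_mono[of 1 "real m" C] by (simp add: field_simps)
  finally show ?thesis by (simp add: w_def)
qed

lemma sqrt_of_nat_le: "sqrt (real m) \<le> real m"
  using real_le_lsqrt[of "real m" "real m"] le_square[of m]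
  by (simp add: power2_eq_square flip: of_nat_mult)

lemma euler_means_bounded_imp_partial_sums_bounded:
  fixes x :: "nat \<Rightarrow> real" and p C A :: real and N :: nat
  assumes p: "p > 0" and C: "C \<ge> 0"
    and x: "\<And>k. k \<ge> 1 \<Longrightarrow> \<bar>x k\<bar> \<le> C / sqrt (real k)"
    and euler: "\<And>n. n \<ge> N \<Longrightarrow>
                  \<bar>\<Sum>k\<le>n. real (n choose k) * p^(n - k) / (p + 1)^n * (\<Sum>j\<le>k. x j)\<bar> \<le> A"
  shows "\<bar>\<Sum>j\<le>m. x j\<bar> \<le> A + 3 * C + \<bar>x 0\<bar> + 2 * C * real N"
proof -
  define S where "S m = (\<Sum>j\<le>m. x j)" for m
  have lip: "\<bar>S m - S k\<bar> \<le> 2 * C * \<bar>sqrt (real m) - sqrt (real k)\<bar>" for m k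
    unfolding S_def by (rule partial_sums_sqrt_lipschitz[OF x C])
  have A: "A \<ge> 0" using euler[of N] by linarith
  show ?thesis
  proof (cases "N \<le> m \<and> 1 \<le> m")
    case False
    then have "sqrt (real m) \<le> real N" using sqrt_of_nat_le[of m] by auto
    then have "\<bar>S m - S 0\<bar> \<le> 2 * C * real N"
      using lip[of m 0] mult_left_mono[of "sqrt (real m)" "real N" "2 * C"] C by simp
    then show ?thesis using A C by (simp add: S_def)
  next
    case True
    define q where "q = 1 / (p + 1)"
    define n where "n = nat \<lfloor>real m * (p + 1)\<rfloor>"
    have q: "0 < q" "q \<le> 1" using p by (simp_all add: q_def)
    have n: "real n \<le> real m * (p + 1)" "real m * (p + 1) < real n + 1"
      using p by (simp_all add: n_def)
    then have mean: "real n * q \<le> real m" "real m < real n * q + q"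
      using p by (simp_all add: q_def field_simps)
    have "m \<le> n" unfolding n_def using p mult_left_mono[of 1 "p + 1" "real m"]
      by (intro le_nat_floor) simp
    then have "N \<le> n" using True by simp
    have "real (n choose k) * p^(n - k) / (p + 1)^n = real (n choose k) * q^k * (1 - q)^(n - k)"
      if "k \<le> n" for k
    proof -
      have "(p + 1)^n = (p + 1)^k * (p + 1)^(n - k)" using that by (simp flip: power_add)
      then show ?thesis using p by (simp add: q_def power_divide field_simps)
    qed
    then have "\<bar>\<Sum>k\<le>n. real (n choose k) * q^k * (1 - q)^(n - k) * S k\<bar> \<le> A"
      using euler[OF \<open>N \<le> n\<close>] by (simp add: S_def)
    moreover have "\<bar>S m - (\<Sum>k\<le>n. real (n choose k) * q^k * (1 - q)^(n - k) * S k)\<bar> \<le> 3 * C"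
      using binomial_average_close[OF lip C _ q mean] True by simp
    moreover have "0 \<le> 2 * C * real N" using C by simp
    ultimately show ?thesis unfolding S_def by linarith
  qed
qed

section \<open>Endpoints of the levels of fuzzy numbers\<close>

definition bounded_interval_levels :: "fuzzy \<Rightarrow> bool" where
  "bounded_interval_levels w \<longleftrightarrow>
     (\<forall>a\<in>{0<..1}. flower w a \<le> fupper w a \<and> flevel w a = {flower w a..fupper w a})
   \<and> (\<exists>B. \<forall>a\<in>{0<..1}. \<bar>flower w a\<bar> \<le> B \<and> \<bar>fupper w a\<bar> \<le> B)"

lemma flevel_pos: "0 < a \<Longrightarrow> flevel w a = {x. a \<le> w x}"
  by (simp add: flevel_def)

lemma bounded_interval_levelsD:
  assumes "bounded_interval_levels w" "0 < a" "a \<le> 1"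
  shows "flower w a \<le> fupper w a" "flevel w a = {flower w a..fupper w a}"
  using assms by (auto simp: bounded_interval_levels_def)

lemma bounded_interval_levels_bound:
  assumes "bounded_interval_levels w"
  obtains B where "\<And>a. 0 < a \<Longrightarrow> a \<le> 1 \<Longrightarrow> \<bar>flower w a\<bar> \<le> B \<and> \<bar>fupper w a\<bar> \<le> B"
  using assms unfolding bounded_interval_levels_def by (meson greaterThanAtMost_iff)

lemma in_flevel_if_below:
  assumes "0 < a" "\<And>b. 0 < b \<Longrightarrow> b < a \<Longrightarrow> y \<in> flevel w b"
  shows "y \<in> flevel w a"
  using dense_le_bounded[OF assms(1), of "w y"] assms by (simp add: flevel_pos)

lemma bounded_interval_levels_antimono:
  assumes w: "bounded_interval_levels w" and "0 < b" "b \<le> s" "s \<le> 1"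
  shows "flower w b \<le> flower w s \<and> fupper w s \<le> fupper w b"
proof -
  have "flevel w s \<subseteq> flevel w b" using assms by (auto simp: flevel_pos)
  then show ?thesis using bounded_interval_levelsD[OF w, of s] bounded_interval_levelsD[OF w, of b] assms
    by auto
qed

lemma bounded_interval_levels_left_continuous:
  assumes w: "bounded_interval_levels w" and a: "0 < a" "a \<le> 1" and e: "e > 0"
  shows "\<exists>b. 0 < b \<and> b < a \<and> flower w a - e < flower w b \<and> fupper w b < fupper w a + e"
proof -
  have level: "flower w b \<le> y \<and> y \<le> fupper w b \<Longrightarrow> y \<in> flevel w b" if "0 < b" "b < a" for b y
    using bounded_interval_levelsD[OF w, of b] that a by auto
  have outside: "y \<notin> flevel w a" if "y < flower w a \<or> fupper w a < y" for y
    using bounded_interval_levelsD[OF w a] that by auto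
  have "\<exists>b1. 0 < b1 \<and> b1 < a \<and> flower w a - e < flower w b1"
  proof (rule ccontr)
    assume "\<not> ?thesis"
    then have "flower w b \<le> flower w a - e" if "0 < b" "b < a" for b
      using that by (meson not_le)
    moreover have "flower w a - e \<le> fupper w b" if "0 < b" "b < a" for b
      using bounded_interval_levels_antimono[OF w, of b a] bounded_interval_levelsD[OF w a] that a e by linarith
    ultimately have "flower w a - e \<in> flevel w a" using level in_flevel_if_below[OF a(1)] by blast
    then show False using outside e by auto
  qed
  then obtain b1 where b1: "0 < b1" "b1 < a" "flower w a - e < flower w b1" by blast
  have "\<exists>b2. 0 < b2 \<and> b2 < a \<and> fupper w b2 < fupper w a + e"
  proof (rule ccontr)
    assume "\<not> ?thesis"
    then have "fupper w a + e \<le> fupper w b" if "0 < b" "b < a" for b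
      using that by (meson not_le)
    moreover have "flower w b \<le> fupper w a + e" if "0 < b" "b < a" for b
      using bounded_interval_levels_antimono[OF w, of b a] bounded_interval_levelsD[OF w a] that a e by linarith
    ultimately have "fupper w a + e \<in> flevel w a" using level in_flevel_if_below[OF a(1)] by blast
    then show False using outside e by auto
  qed
  then obtain b2 where b2: "0 < b2" "b2 < a" "fupper w b2 < fupper w a + e" by blast
  have "flower w b1 \<le> flower w (max b1 b2)" "fupper w (max b1 b2) \<le> fupper w b2"
    using bounded_interval_levels_antimono[OF w, of b1 "max b1 b2"] bounded_interval_levels_antimono[OF w, of b2 "max b1 b2"]
      b1 b2 a by auto
  then show ?thesis using b1 b2 by (intro exI[of _ "max b1 b2"]) auto
qed

lemma flevel_from_levels:
  fixes L :: "real \<Rightarrow> real set" and l r :: "real \<Rightarrow> real"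
  assumes antimono: "\<And>b s. 0 < b \<Longrightarrow> b \<le> s \<Longrightarrow> s \<le> 1 \<Longrightarrow> l b \<le> l s \<and> r s \<le> r b"
    and left_cont: "\<And>a e. 0 < a \<Longrightarrow> a \<le> 1 \<Longrightarrow> e > 0 \<Longrightarrow>
                      \<exists>b. 0 < b \<and> b < a \<and> l a - e < l b \<and> r b < r a + e"
    and L: "\<And>b. 0 < b \<Longrightarrow> b \<le> 1 \<Longrightarrow> L b = {l b..r b}"
    and a: "0 < a" "a \<le> 1"
  shows "flevel (from_levels L) a = {l a..r a}"
proof -
  have "a \<le> from_levels L x \<longleftrightarrow> x \<in> {l a..r a}" for x
  proof -
    define S where "S = {0} \<union> {b. 0 < b \<and> b \<le> 1 \<and> x \<in> L b}"
    have S: "S \<noteq> {}" "bdd_above S" unfolding S_def by (auto intro: bdd_aboveI[of _ 1])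
    have from_levels: "from_levels L x = Sup S" unfolding from_levels_def S_def by simp
    show ?thesis
    proof
      assume "a \<le> from_levels L x"
      have below: "l b \<le> x \<and> x \<le> r b" if "0 < b" "b < a" for b
      proof -
        have "b < Sup S" using \<open>a \<le> from_levels L x\<close> from_levels that by linarith
        then obtain s where "s \<in> S" "b < s" using less_cSup_iff[OF S] by blast
        then have "0 < s" "s \<le> 1" "x \<in> {l s..r s}" using that L unfolding S_def by auto
        then show ?thesis using antimono[of b s] that \<open>b < s\<close> by auto
      qed
      have "l a \<le> x"
      proof (rule ccontr)
        assume "\<not> l a \<le> x"
        then obtain b where "0 < b" "b < a" "x < l b" using left_cont[OF a, of "l a - x"] by auto
        with below[of b] show False by auto
      qed
      moreover have "x \<le> r a"
      proof (rule ccontr)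
        assume "\<not> x \<le> r a"
        then obtain b where "0 < b" "b < a" "r b < x" using left_cont[OF a, of "x - r a"] by auto
        with below[of b] show False by auto
      qed
      ultimately show "x \<in> {l a..r a}" by auto
    next
      assume "x \<in> {l a..r a}"
      then have "a \<in> S" using L a unfolding S_def by auto
      then show "a \<le> from_levels L x" using from_levels cSup_upper[OF _ S(2)] by simp
    qed
  qed
  then show ?thesis using a(1) by (simp add: flevel_pos set_eq_iff)
qed

lemma bounded_interval_levels_from_levels:
  fixes L :: "real \<Rightarrow> real set" and l r :: "real \<Rightarrow> real"
  assumes antimono: "\<And>b s. 0 < b \<Longrightarrow> b \<le> s \<Longrightarrow> s \<le> 1 \<Longrightarrow> l b \<le> l s \<and> r s \<le> r b"
    and left_cont: "\<And>a e. 0 < a \<Longrightarrow> a \<le> 1 \<Longrightarrow> e > 0 \<Longrightarrow>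
                      \<exists>b. 0 < b \<and> b < a \<and> l a - e < l b \<and> r b < r a + e"
    and L: "\<And>b. 0 < b \<Longrightarrow> b \<le> 1 \<Longrightarrow> L b = {l b..r b}"
    and nonempty: "\<And>b. 0 < b \<Longrightarrow> b \<le> 1 \<Longrightarrow> l b \<le> r b"
    and bound: "\<And>b. 0 < b \<Longrightarrow> b \<le> 1 \<Longrightarrow> \<bar>l b\<bar> \<le> B \<and> \<bar>r b\<bar> \<le> B"
  shows "bounded_interval_levels (from_levels L)
    \<and> (\<forall>a\<in>{0<..1}. flower (from_levels L) a = l a \<and> fupper (from_levels L) a = r a)"
proof -
  have ends: "\<forall>a\<in>{0<..1}. flower (from_levels L) a = l a \<and> fupper (from_levels L) a = r a"
    using flevel_from_levels[OF antimono left_cont L] nonempty by (simp add: flower_def fupper_def)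
  then show ?thesis
    unfolding bounded_interval_levels_def
    using flevel_from_levels[OF antimono left_cont L] nonempty bound by (auto intro!: exI[of _ B])
qed

lemma set_plus_atLeastAtMost:
  fixes a b c d :: real
  assumes "a \<le> b" "c \<le> d"
  shows "{y + z | y z. y \<in> {a..b} \<and> z \<in> {c..d}} = {a + c..b + d}"
proof
  show "{a + c..b + d} \<subseteq> {y + z | y z. y \<in> {a..b} \<and> z \<in> {c..d}}"
  proof
    fix x assume x: "x \<in> {a + c..b + d}"
    then have "max a (x - d) \<in> {a..b}" "x - max a (x - d) \<in> {c..d}" using assms by auto
    then show "x \<in> {y + z | y z. y \<in> {a..b} \<and> z \<in> {c..d}}"
      by (intro CollectI exI[of _ "max a (x - d)"] exI[of _ "x - max a (x - d)"]) auto
  qed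
qed auto

lemma fadd_endpoints:
  assumes u: "bounded_interval_levels u" and v: "bounded_interval_levels v"
  shows "bounded_interval_levels (fadd u v)
    \<and> (\<forall>a\<in>{0<..1}. flower (fadd u v) a = flower u a + flower v a
                    \<and> fupper (fadd u v) a = fupper u a + fupper v a)"
proof -
  obtain Bu Bv where
    Bu: "\<And>a. 0 < a \<Longrightarrow> a \<le> 1 \<Longrightarrow> \<bar>flower u a\<bar> \<le> Bu \<and> \<bar>fupper u a\<bar> \<le> Bu" and
    Bv: "\<And>a. 0 < a \<Longrightarrow> a \<le> 1 \<Longrightarrow> \<bar>flower v a\<bar> \<le> Bv \<and> \<bar>fupper v a\<bar> \<le> Bv"
    by (metis bounded_interval_levels_bound u v)
  show ?thesis
    unfolding fadd_def
  proof (rule bounded_interval_levels_from_levels)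
    fix a e :: real assume a: "0 < a" "a \<le> 1" and e: "e > 0"
    obtain b1 where b1: "0 < b1" "b1 < a" "flower u a - e/2 < flower u b1" "fupper u b1 < fupper u a + e/2"
      using bounded_interval_levels_left_continuous[OF u a, of "e/2"] e by auto
    obtain b2 where b2: "0 < b2" "b2 < a" "flower v a - e/2 < flower v b2" "fupper v b2 < fupper v a + e/2"
      using bounded_interval_levels_left_continuous[OF v a, of "e/2"] e by auto
    have "flower u b1 \<le> flower u (max b1 b2)" "fupper u (max b1 b2) \<le> fupper u b1"
      "flower v b2 \<le> flower v (max b1 b2)" "fupper v (max b1 b2) \<le> fupper v b2"
      using bounded_interval_levels_antimono[OF u, of b1 "max b1 b2"]
        bounded_interval_levels_antimono[OF v, of b2 "max b1 b2"] b1 b2 a by auto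
    then show "\<exists>b. 0 < b \<and> b < a \<and> flower u a + flower v a - e < flower u b + flower v b
                  \<and> fupper u b + fupper v b < fupper u a + fupper v a + e"
      using b1 b2 by (intro exI[of _ "max b1 b2"]) auto
  next
    fix b :: real assume b: "0 < b" "b \<le> 1"
    show "{y + z |y z. y \<in> flevel u b \<and> z \<in> flevel v b}
            = {flower u b + flower v b..fupper u b + fupper v b}"
      unfolding bounded_interval_levelsD(2)[OF u b] bounded_interval_levelsD(2)[OF v b]
      by (rule set_plus_atLeastAtMost[OF bounded_interval_levelsD(1)[OF u b]
            bounded_interval_levelsD(1)[OF v b]])
    show "flower u b + flower v b \<le> fupper u b + fupper v b"
      using bounded_interval_levelsD[OF u b] bounded_interval_levelsD[OF v b] by simp
    show "\<bar>flower u b + flower v b\<bar> \<le> Bu + Bv \<and> \<bar>fupper u b + fupper v b\<bar> \<le> Bu + Bv"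
      using Bu[OF b] Bv[OF b] by linarith
  qed (use bounded_interval_levels_antimono[OF u] bounded_interval_levels_antimono[OF v] in \<open>meson add_mono\<close>)
qed

lemma fscale_endpoints:
  assumes w: "bounded_interval_levels w" and c: "c > 0"
  shows "bounded_interval_levels (fscale c w)
    \<and> (\<forall>a\<in>{0<..1}. flower (fscale c w) a = c * flower w a \<and> fupper (fscale c w) a = c * fupper w a)"
proof -
  obtain B where B: "\<And>a. 0 < a \<Longrightarrow> a \<le> 1 \<Longrightarrow> \<bar>flower w a\<bar> \<le> B \<and> \<bar>fupper w a\<bar> \<le> B"
    by (metis bounded_interval_levels_bound w)
  show ?thesis
    unfolding fscale_def
  proof (rule bounded_interval_levels_from_levels)
    fix a e :: real assume a: "0 < a" "a \<le> 1" and e: "e > 0"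
    obtain b where "0 < b" "b < a" "flower w a - e/c < flower w b" "fupper w b < fupper w a + e/c"
      using bounded_interval_levels_left_continuous[OF w a, of "e/c"] e c by auto
    then show "\<exists>b. 0 < b \<and> b < a \<and> c * flower w a - e < c * flower w b \<and> c * fupper w b < c * fupper w a + e"
      using c by (intro exI[of _ b]) (simp add: field_simps)
  next
    fix b :: real assume b: "0 < b" "b \<le> 1"
    show "(\<lambda>y. c * y) ` flevel w b = {c * flower w b..c * fupper w b}"
      "c * flower w b \<le> c * fupper w b"
      using bounded_interval_levelsD[OF w b] c by simp_all
    show "\<bar>c * flower w b\<bar> \<le> c * B \<and> \<bar>c * fupper w b\<bar> \<le> c * B"
      using B[OF b] c by (simp add: abs_mult)
  qed (use bounded_interval_levels_antimono[OF w] c in simp)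
qed

lemma fsum_endpoints:
  assumes "\<And>k. k \<le> n \<Longrightarrow> bounded_interval_levels (f k)"
  shows "bounded_interval_levels (fsum f n)
    \<and> (\<forall>a\<in>{0<..1}. flower (fsum f n) a = (\<Sum>k\<le>n. flower (f k) a)
                    \<and> fupper (fsum f n) a = (\<Sum>k\<le>n. fupper (f k) a))"
  using assms
proof (induction n)
  case (Suc n)
  then show ?case using fadd_endpoints[of "fsum f n" "f (Suc n)"] by simp
qed simp

lemma fuzzy_number_bounded_interval_levels:
  assumes "fuzzy_number u"
  shows "bounded_interval_levels u"
proof -
  have quasiconcave: "\<And>x y l. 0 \<le> l \<and> l \<le> 1 \<Longrightarrow> min (u x) (u y) \<le> u (l * x + (1 - l) * y)"
    and "usc u" and "compact (closure {x. 0 < u x})" and "\<exists>x. u x = 1"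
    using assms unfolding fuzzy_number_def by blast+
  then obtain B where B: "\<And>x. x \<in> closure {x. 0 < u x} \<Longrightarrow> \<bar>x\<bar> \<le> B"
    by (meson compact_imp_bounded bounded_real)
  have support: "flevel u a \<subseteq> closure {x. 0 < u x}" if "0 < a" for a
    using that by (auto simp: flevel_pos intro: closure_subset[THEN subsetD])
  have "\<exists>l r. l \<le> r \<and> flevel u a = {l..r}" if a: "0 < a" "a \<le> 1" for a
  proof -
    have "closed (flevel u a)" using \<open>usc u\<close> a by (simp add: flevel_pos usc_def)
    then have "compact (flevel u a)"
      using support[OF a(1)] \<open>compact (closure {x. 0 < u x})\<close> compact_Int_closed inf.absorb_iff2 by metis
    moreover have "convex (flevel u a)"
      unfolding convex_def flevel_pos[OF a(1)]
      using quasiconcave by simp (smt (verit, best))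
    moreover obtain x1 where "u x1 = 1" using \<open>\<exists>x. u x = 1\<close> by blast
    then have "flevel u a \<noteq> {}" using a by (auto simp: flevel_pos intro!: exI[of _ x1])
    ultimately show ?thesis
      using connected_compact_interval_1 convex_connected by (metis atLeastatMost_empty_iff)
  qed
  moreover have "flevel u a \<subseteq> {-B..B}" if "0 < a" for a
    using support[OF that] B by (force simp: abs_le_iff)
  ultimately show ?thesis
    unfolding bounded_interval_levels_def flower_def fupper_def
    by (fastforce intro!: exI[of _ B])
qed

lemma flevel_fzero:
  assumes "0 \<le> a" "a \<le> 1"
  shows "flevel fzero a = {0}"
proof (cases "a = 0")
  case True
  have "{x. 0 < fzero x} = {0}" by (auto simp: fzero_def)
  then show ?thesis using True by (simp add: flevel_def)
next
  case False
  then have "{x. a \<le> fzero x} = {0}" using assms by (auto simp: fzero_def)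
  then show ?thesis using False assms by (simp add: flevel_pos)
qed

lemma fzero_endpoints: "0 \<le> a \<Longrightarrow> a \<le> 1 \<Longrightarrow> flower fzero a = 0 \<and> fupper fzero a = 0"
  by (simp add: flower_def fupper_def flevel_fzero)

lemma bounded_interval_levels_fzero: "bounded_interval_levels fzero"
  by (auto simp: bounded_interval_levels_def flevel_fzero fzero_endpoints)

lemma endpoint_diff_le_fdist:
  assumes u: "bounded_interval_levels u" and v: "bounded_interval_levels v" and a: "0 \<le> a" "a \<le> 1"
  shows "\<bar>flower u a - flower v a\<bar> \<le> fdist u v \<and> \<bar>fupper u a - fupper v a\<bar> \<le> fdist u v"
proof -
  define d where "d a = max \<bar>flower u a - flower v a\<bar> \<bar>fupper u a - fupper v a\<bar>" for a
  obtain Bu Bv where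
    Bu: "\<And>a. 0 < a \<Longrightarrow> a \<le> 1 \<Longrightarrow> \<bar>flower u a\<bar> \<le> Bu \<and> \<bar>fupper u a\<bar> \<le> Bu" and
    Bv: "\<And>a. 0 < a \<Longrightarrow> a \<le> 1 \<Longrightarrow> \<bar>flower v a\<bar> \<le> Bv \<and> \<bar>fupper v a\<bar> \<le> Bv"
    by (metis bounded_interval_levels_bound u v)
  have "d a \<le> max (Bu + Bv) (d 0)" if "a \<in> {0..1}" for a
  proof (cases "a = 0")
    case False
    then have "0 < a" "a \<le> 1" using that by auto
    then have "\<bar>flower u a - flower v a\<bar> \<le> Bu + Bv" "\<bar>fupper u a - fupper v a\<bar> \<le> Bu + Bv"
      using Bu Bv abs_triangle_ineq4 by (smt (verit))+
    then show ?thesis unfolding d_def max.bounded_iff le_max_iff_disj by blast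
  qed simp
  then have "d a \<le> fdist u v"
    unfolding fdist_def d_def[symmetric] using a by (intro cSUP_upper bdd_aboveI2) auto
  then show ?thesis by (simp add: d_def)
qed

lemma fdist_nonneg:
  assumes "bounded_interval_levels u" "bounded_interval_levels v"
  shows "0 \<le> fdist u v"
  using endpoint_diff_le_fdist[OF assms, of 1] abs_ge_zero order_trans by fastforce

lemma fdist_fzero_le:
  assumes w: "bounded_interval_levels w"
    and K: "\<And>a. 0 < a \<Longrightarrow> a \<le> 1 \<Longrightarrow> \<bar>flower w a\<bar> \<le> K \<and> \<bar>fupper w a\<bar> \<le> K"
  shows "fdist w fzero \<le> K"
proof -
  have "{x. 0 < w x} \<subseteq> {-K..K}"
  proof
    fix x assume "x \<in> {x. 0 < w x}"
    define a where "a = min (w x) 1"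
    have a: "0 < a" "a \<le> 1" and "x \<in> flevel w a"
      using \<open>x \<in> {x. 0 < w x}\<close> by (auto simp: a_def flevel_pos)
    then have "flower w a \<le> x" "x \<le> fupper w a" using bounded_interval_levelsD(2)[OF w a] by auto
    then show "x \<in> {-K..K}" using K[OF a] unfolding abs_le_iff by simp
  qed
  then have level0: "flevel w 0 \<subseteq> {-K..K}" by (simp add: flevel_def closure_minimal)
  have "flower w 1 \<in> flevel w 1" using bounded_interval_levelsD[OF w, of 1] by simp
  then have "flower w 1 \<in> {x. 0 < w x}" by (simp add: flevel_pos)
  then have nonempty: "flevel w 0 \<noteq> {}" using closure_subset by (auto simp: flevel_def)
  have "bdd_below (flevel w 0)" "bdd_above (flevel w 0)"
    using bdd_below_mono[OF _ level0] bdd_above_mono[OF _ level0] by simp_all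
  then have "flower w 0 \<le> fupper w 0"
    unfolding flower_def fupper_def using cInf_le_cSup[OF nonempty] by blast
  moreover have "-K \<le> flower w 0" "fupper w 0 \<le> K"
    unfolding flower_def fupper_def using nonempty level0
    by (auto intro!: cInf_greatest cSup_least)
  ultimately have level0_bound: "\<bar>flower w 0\<bar> \<le> K \<and> \<bar>fupper w 0\<bar> \<le> K" by linarith
  show ?thesis
    unfolding fdist_def
  proof (rule cSUP_least)
    fix a :: real assume a: "a \<in> {0..1}"
    then have "\<bar>flower w a\<bar> \<le> K \<and> \<bar>fupper w a\<bar> \<le> K"
      using K level0_bound by (cases "a = 0") auto
    then show "max \<bar>flower w a - flower fzero a\<bar> \<bar>fupper w a - fupper fzero a\<bar> \<le> K"
      using fzero_endpoints[of a] a by simp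
  qed simp
qed

lemma euler_mean_endpoints:
  assumes p: "p > 0" and s: "\<And>k. bounded_interval_levels (s k)"
  shows "bounded_interval_levels (euler_mean p s n)
    \<and> (\<forall>a\<in>{0<..1}.
         flower (euler_mean p s n) a = (\<Sum>k\<le>n. real (n choose k) * p^(n - k) / (p + 1)^n * flower (s k) a)
       \<and> fupper (euler_mean p s n) a = (\<Sum>k\<le>n. real (n choose k) * p^(n - k) / (p + 1)^n * fupper (s k) a))"
proof -
  define c where "c k = real (n choose k) * p^(n - k) / (p + 1)^n" for k
  have "bounded_interval_levels (fscale (c k) (s k))
    \<and> (\<forall>a\<in>{0<..1}. flower (fscale (c k) (s k)) a = c k * flower (s k) a
                    \<and> fupper (fscale (c k) (s k)) a = c k * fupper (s k) a)" if "k \<le> n" for k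
    using fscale_endpoints[OF s, of "c k"] p that by (simp add: c_def)
  then show ?thesis
    using fsum_endpoints[of n "\<lambda>k. fscale (c k) (s k)"]
    unfolding euler_mean_def c_def[symmetric] by simp
qed

section \<open>Bounded partial sums\<close>

lemma endpoint_partial_sums_bounded:
  assumes p: "p > 0" and u: "\<And>k. bounded_interval_levels (u k)"
    and \<nu>: "bounded_interval_levels \<nu>"
    and K: "K \<ge> 0" "\<And>k. k \<ge> 1 \<Longrightarrow> fdist (u k) fzero \<le> K / sqrt (real k)"
    and N: "\<And>n. n \<ge> N \<Longrightarrow> fdist (euler_mean p (fsum u) n) \<nu> \<le> 1"
    and e: "e \<in> {flower, fupper}" and a: "0 < a" "a \<le> 1"
  shows "\<bar>e (fsum u m) a\<bar> \<le> fdist \<nu> fzero + 1 + 3 * K + fdist (u 0) fzero + 2 * K * real N"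
proof -
  have endpoint_dist: "\<bar>e w a - e w' a\<bar> \<le> fdist w w'"
    if "bounded_interval_levels w" "bounded_interval_levels w'" for w w'
    using endpoint_diff_le_fdist[OF that, of a] e a by auto
  have endpoint_norm: "\<bar>e w a\<bar> \<le> fdist w fzero" if "bounded_interval_levels w" for w
    using endpoint_dist[OF that bounded_interval_levels_fzero] fzero_endpoints[of a] e a by auto
  have s: "bounded_interval_levels (fsum u k) \<and> e (fsum u k) a = (\<Sum>j\<le>k. e (u j) a)" for k
    using fsum_endpoints[of k u] u e a by auto
  have t: "bounded_interval_levels (euler_mean p (fsum u) n)
    \<and> e (euler_mean p (fsum u) n) a
        = (\<Sum>k\<le>n. real (n choose k) * p^(n - k) / (p + 1)^n * (\<Sum>j\<le>k. e (u j) a))" for n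
    using euler_mean_endpoints[OF p, of "fsum u" n] s e a by auto
  have "\<bar>\<Sum>j\<le>m. e (u j) a\<bar> \<le> fdist \<nu> fzero + 1 + 3 * K + \<bar>e (u 0) a\<bar> + 2 * K * real N"
  proof (rule euler_means_bounded_imp_partial_sums_bounded[OF p K(1)])
    show "\<bar>e (u k) a\<bar> \<le> K / sqrt (real k)" if "k \<ge> 1" for k
      using endpoint_norm[OF u] K(2)[OF that] order_trans by blast
    show "\<bar>\<Sum>k\<le>n. real (n choose k) * p^(n - k) / (p + 1)^n * (\<Sum>j\<le>k. e (u j) a)\<bar>
            \<le> fdist \<nu> fzero + 1" if "n \<ge> N" for n
    proof -
      have "\<bar>e (euler_mean p (fsum u) n) a - e \<nu> a\<bar> \<le> 1"
        using endpoint_dist[OF conjunct1[OF t] \<nu>] N[OF that] by (rule order_trans)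
      then show ?thesis using t[of n] endpoint_norm[OF \<nu>] by (smt (verit))
    qed
  qed
  then show ?thesis using s[of m] endpoint_norm[OF u, of 0] by linarith
qed

theorem mainTheorem2:
  fixes p :: real and u :: "nat \<Rightarrow> fuzzy" and \<nu> :: fuzzy
  assumes "p > 0"
    and "\<And>n. fuzzy_number (u n)"
    and "fuzzy_number \<nu>"
    and "Ep_summable_series p u \<nu>"
    and "Bseq (\<lambda>n. sqrt (real n) * fdist (u n) fzero)"
  shows "bs_F u"
proof -
  have u: "bounded_interval_levels (u k)" for k
    using assms(2) by (rule fuzzy_number_bounded_interval_levels)
  have \<nu>: "bounded_interval_levels \<nu>"
    using assms(3) by (rule fuzzy_number_bounded_interval_levels)
  obtain K where K: "K > 0" "\<And>k. \<bar>sqrt (real k) * fdist (u k) fzero\<bar> \<le> K"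
    using assms(5) by (auto simp: Bseq_def)
  then have decay: "fdist (u k) fzero \<le> K / sqrt (real k)" if "k \<ge> 1" for k
    using that by (simp add: field_simps abs_le_iff mult.commute)
  obtain N where N: "\<And>n. n \<ge> N \<Longrightarrow> fdist (euler_mean p (fsum u) n) \<nu> \<le> 1"
    using LIMSEQ_D[OF assms(4)[unfolded Ep_summable_series_def Ep_summable_seq_def], of 1]
    by (force simp: abs_less_iff)
  define B where "B = fdist \<nu> fzero + 1 + 3 * K + fdist (u 0) fzero + 2 * K * real N"
  have bound: "\<bar>e (fsum u m) a\<bar> \<le> B" if "e \<in> {flower, fupper}" "0 < a" "a \<le> 1" for e m a
    unfolding B_def
    by (rule endpoint_partial_sums_bounded[where u = u, OF assms(1) u \<nu> less_imp_le[OF K(1)] decay N that])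
  have "fdist (fsum u m) fzero \<le> B" for m
  proof (rule fdist_fzero_le)
    show "bounded_interval_levels (fsum u m)" using fsum_endpoints u by blast
    show "\<bar>flower (fsum u m) a\<bar> \<le> B \<and> \<bar>fupper (fsum u m) a\<bar> \<le> B" if "0 < a" "a \<le> 1" for a
      using bound[of flower a m] bound[of fupper a m] that by simp
  qed
  moreover have "B \<ge> 0"
    using K(1) fdist_nonneg[OF \<nu> bounded_interval_levels_fzero]
      fdist_nonneg[OF u bounded_interval_levels_fzero] by (simp add: B_def)
  ultimately show ?thesis
    unfolding bs_F_def by (meson add_nonneg_pos le_less_trans less_add_one zero_less_one)
qed

end
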